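(* Consider a finite reward-free MDP with occupancy polytope $\Phi$, let $d_e\in\Phi$, and let $F_e$ be the minimal face of $\Phi$ containing $d_e$. For any $r\in\mathcal R(d_e)$, the optimal occupancy set $\Phi^\star(r):=\arg\max_{d\in\Phi}r^\top d$ is an exposed face of $\Phi$ containing $d_e$. Moreover, if $r\in\mathrm{relint}(\mathcal R(d_e))$, then $\Phi^\star(r)=F_e$.
   Context: The MDP has finite $S$, $A$, transitions $P$, initial distribution $\mu_0$, discount $\gamma\in(0,1)$; $(Md)(s)=\sum_a d(s,a)-\gamma\sum_{s',a'}P(s\mid s',a')d(s',a')$ and $\Phi=\{d\ge0:Md=(1-\gamma)\mu_0\}$ (a polytope). Rewards are $r\in\Delta(S\times A)$ (probability simplex). $\mathrm{subopt}(r,d):=\max_{\tilde d\in\Phi}r^\top\tilde d-r^\top d$ and $\mathcal R(d_e):=\{r\in\Delta(S\times A):\mathrm{subopt}(r,d_e)=0\}$. $\mathrm{relint}$ denotes relative interior. *)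

theory Defs
  imports "HOL-Analysis.Analysis"
begin

text \<open>Occupancy measures / rewards are vectors in real^(S x A) for finite types S, A.
  P s s' a' is the transition probability P(s | s', a').\<close>

definition flow_op ::
  "('s::finite \<Rightarrow> 's \<Rightarrow> 'a::finite \<Rightarrow> real) \<Rightarrow> real \<Rightarrow> real ^ ('s \<times> 'a) \<Rightarrow> 's \<Rightarrow> real" where
  "flow_op P \<gamma> d s = (\<Sum>a\<in>UNIV. d $ (s, a)) - \<gamma> * (\<Sum>p\<in>UNIV. P s (fst p) (snd p) * d $ p)"

definition occ_polytope ::
  "('s::finite \<Rightarrow> 's \<Rightarrow> 'a::finite \<Rightarrow> real) \<Rightarrow> ('s \<Rightarrow> real) \<Rightarrow> real \<Rightarrow> (real ^ ('s \<times> 'a)) set" where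
  "occ_polytope P \<mu>0 \<gamma> = {d. (\<forall>i. 0 \<le> d $ i) \<and> (\<forall>s. flow_op P \<gamma> d s = (1 - \<gamma>) * \<mu>0 s)}"

definition reward_simplex :: "(real ^ 'n::finite) set" where
  "reward_simplex = {r. (\<forall>i. 0 \<le> r $ i) \<and> (\<Sum>i\<in>UNIV. r $ i) = 1}"

definition subopt :: "(real ^ 'n::finite) set \<Rightarrow> real ^ 'n \<Rightarrow> real ^ 'n \<Rightarrow> real" where
  "subopt \<Phi> r d = (SUP d'\<in>\<Phi>. r \<bullet> d') - r \<bullet> d"

definition feasible_rewards :: "(real ^ 'n::finite) set \<Rightarrow> real ^ 'n \<Rightarrow> (real ^ 'n) set" where
  "feasible_rewards \<Phi> de = {r \<in> reward_simplex. subopt \<Phi> r de = 0}"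

definition opt_set :: "(real ^ 'n::finite) set \<Rightarrow> real ^ 'n \<Rightarrow> (real ^ 'n) set" where
  "opt_set \<Phi> r = {d \<in> \<Phi>. \<forall>d'\<in>\<Phi>. r \<bullet> d' \<le> r \<bullet> d}"

definition minimal_face_containing :: "'v::real_vector set \<Rightarrow> 'v \<Rightarrow> 'v set \<Rightarrow> bool" where
  "minimal_face_containing S x F \<longleftrightarrow>
     F face_of S \<and> x \<in> F \<and> (\<forall>G. G face_of S \<and> x \<in> G \<longrightarrow> F \<subseteq> G)"

end

theory Submission
  imports Defs
begin

text \<open>Since \<open>\<Phi>\<close> lies in the probability simplex, the supremum of \<open>r \<bullet> d\<close> over \<open>\<Phi>\<close> is
  finite, so \<open>\<R>(d\<^sub>e)\<close> consists of the simplex rewards for which \<open>d\<^sub>e\<close> is optimal and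
  \<open>\<Phi>\<^sup>\<star>(r)\<close> is cut out of \<open>\<Phi>\<close> by the supporting hyperplane \<open>r \<bullet> x = r \<bullet> d\<^sub>e\<close>.
  If \<open>r\<close> is in the relative interior of the convex set \<open>\<R>(d\<^sub>e)\<close> and \<open>r' \<in> \<R>(d\<^sub>e)\<close>, the
  segment from \<open>r'\<close> through \<open>r\<close> can be prolonged slightly beyond \<open>r\<close> inside \<open>\<R>(d\<^sub>e)\<close>,
  which forces \<open>\<Phi>\<^sup>\<star>(r) \<subseteq> \<Phi>\<^sup>\<star>(r')\<close>. Faces of the polyhedron \<open>\<Phi>\<close> are exposed, and on
  the hyperplane \<open>\<Sum>\<^sub>i x\<^sub>i = 1\<close> an exposing functional can be shifted by a constant vector
  and rescaled into the simplex; hence \<open>F\<^sub>e = \<Phi>\<^sup>\<star>(r')\<close> for some \<open>r' \<in> \<R>(d\<^sub>e)\<close>, while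
  \<open>F\<^sub>e \<subseteq> \<Phi>\<^sup>\<star>(r)\<close> by minimality.\<close>

lemma flow_op_eq_inner:
  fixes P :: "'s::finite \<Rightarrow> 's \<Rightarrow> 'a::finite \<Rightarrow> real"
  shows "flow_op P \<gamma> d s = (\<chi> p. of_bool (fst p = s) - \<gamma> * P s (fst p) (snd p)) \<bullet> d"
proof -
  have "(\<Sum>p\<in>UNIV. of_bool (fst p = s) * d $ p) = (\<Sum>s'\<in>UNIV. \<Sum>a\<in>UNIV. of_bool (s' = s) * d $ (s', a))"
    unfolding sum.cartesian_product by (simp add: case_prod_unfold)
  also have "\<dots> = (\<Sum>a\<in>UNIV. d $ (s, a))"
    unfolding sum_distrib_left[symmetric] by simp
  finally show ?thesis
    by (simp add: flow_op_def inner_vec_def algebra_simps sum_subtractf sum_distrib_left)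
qed

lemma polyhedron_occ_polytope:
  fixes P :: "'s::finite \<Rightarrow> 's \<Rightarrow> 'a::finite \<Rightarrow> real"
  shows "polyhedron (occ_polytope P \<mu>0 \<gamma>)"
proof -
  have eq: "occ_polytope P \<mu>0 \<gamma> = (\<Inter>i. {x. axis i 1 \<bullet> x \<ge> 0}) \<inter>
     (\<Inter>s. {x. (\<chi> p. of_bool (fst p = s) - \<gamma> * P s (fst p) (snd p)) \<bullet> x = (1 - \<gamma>) * \<mu>0 s})"
    unfolding occ_polytope_def flow_op_eq_inner[symmetric] by (auto simp: inner_axis')
  show ?thesis
    unfolding eq by (intro polyhedron_Int polyhedron_Inter) (auto intro: polyhedron_halfspace_ge polyhedron_hyperplane)
qed

lemma sum_flow_op:
  fixes P :: "'s::finite \<Rightarrow> 's \<Rightarrow> 'a::finite \<Rightarrow> real"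
  assumes "\<forall>s' a. (\<Sum>s\<in>UNIV. P s s' a) = 1"
  shows "(\<Sum>s\<in>UNIV. flow_op P \<gamma> d s) = (1 - \<gamma>) * (\<Sum>p\<in>UNIV. d $ p)"
proof -
  have "(\<Sum>s\<in>UNIV. \<Sum>p\<in>UNIV. P s (fst p) (snd p) * d $ p) = (\<Sum>p\<in>UNIV. (\<Sum>s\<in>UNIV. P s (fst p) (snd p)) * d $ p)"
    by (subst sum.swap) (simp add: sum_distrib_right)
  also have "\<dots> = (\<Sum>p\<in>UNIV. d $ p)"
    using assms by simp
  finally show ?thesis
    unfolding flow_op_def sum_subtractf sum_distrib_left[symmetric] sum.cartesian_product
    by (simp add: case_prod_unfold algebra_simps)
qed

lemma occ_polytope_subset_reward_simplex:
  fixes P :: "'s::finite \<Rightarrow> 's \<Rightarrow> 'a::finite \<Rightarrow> real"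
  assumes "\<forall>s' a. (\<Sum>s\<in>UNIV. P s s' a) = 1" and "(\<Sum>s\<in>UNIV. \<mu>0 s) = 1" and "\<gamma> < 1"
  shows "occ_polytope P \<mu>0 \<gamma> \<subseteq> reward_simplex"
proof
  fix d assume d: "d \<in> occ_polytope P \<mu>0 \<gamma>"
  then have "(1 - \<gamma>) * (\<Sum>p\<in>UNIV. d $ p) = (\<Sum>s\<in>UNIV. (1 - \<gamma>) * \<mu>0 s)"
    by (simp add: sum_flow_op[OF assms(1), symmetric] occ_polytope_def)
  also have "\<dots> = (1 - \<gamma>) * 1"
    by (simp add: sum_distrib_left[symmetric] assms(2))
  finally show "d \<in> reward_simplex"
    using d \<open>\<gamma> < 1\<close> by (simp add: reward_simplex_def occ_polytope_def)
qed

lemma bounded_reward_simplex: "bounded (reward_simplex :: (real ^ 'n::finite) set)"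
proof -
  have "norm r \<le> 1" if "r \<in> reward_simplex" for r :: "real ^ 'n"
    using norm_le_l1_cart[of r] that by (simp add: reward_simplex_def)
  then show ?thesis
    by (auto simp: bounded_iff)
qed

lemma convex_reward_simplex: "convex (reward_simplex :: (real ^ 'n::finite) set)"
  by (auto simp: convex_def reward_simplex_def sum.distrib sum_distrib_left[symmetric])

lemma feasible_rewards_iff:
  fixes \<Phi> :: "(real ^ 'n::finite) set"
  assumes "bounded \<Phi>" and "de \<in> \<Phi>"
  shows "r \<in> feasible_rewards \<Phi> de \<longleftrightarrow> r \<in> reward_simplex \<and> (\<forall>d\<in>\<Phi>. r \<bullet> d \<le> r \<bullet> de)"
proof -
  have "bdd_above ((\<bullet>) r ` \<Phi>)"
    using assms(1) by (intro bounded_imp_bdd_above bounded_linear_image bounded_linear_inner_right)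
  then have "(SUP d\<in>\<Phi>. r \<bullet> d) = r \<bullet> de \<longleftrightarrow> (\<forall>d\<in>\<Phi>. r \<bullet> d \<le> r \<bullet> de)"
    using assms(2) by (metis (no_types, lifting) antisym cSUP_least cSUP_upper empty_iff)
  then show ?thesis
    by (simp add: feasible_rewards_def subopt_def)
qed

lemma convex_feasible_rewards:
  fixes \<Phi> :: "(real ^ 'n::finite) set"
  assumes "bounded \<Phi>" and "de \<in> \<Phi>"
  shows "convex (feasible_rewards \<Phi> de)"
proof -
  have "feasible_rewards \<Phi> de = reward_simplex \<inter> (\<Inter>d\<in>\<Phi>. {r. (d - de) \<bullet> r \<le> 0})"
    using feasible_rewards_iff[OF assms] by (auto simp: inner_diff_left inner_diff_right inner_commute)
  then show ?thesis
    by (auto intro!: convex_Int convex_INT convex_halfspace_le convex_reward_simplex)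
qed

lemma opt_set_eq_supporting_hyperplane:
  assumes "de \<in> \<Phi>" and "\<forall>d\<in>\<Phi>. r \<bullet> d \<le> r \<bullet> de"
  shows "opt_set \<Phi> r = \<Phi> \<inter> {x. r \<bullet> x = r \<bullet> de}"
  using assms by (force simp: opt_set_def intro: antisym)

lemma feasible_reward_opt_set_exposed_face:
  fixes \<Phi> :: "(real ^ 'n::finite) set"
  assumes "convex \<Phi>" and "bounded \<Phi>" and "de \<in> \<Phi>" and "r \<in> feasible_rewards \<Phi> de"
  shows "opt_set \<Phi> r exposed_face_of \<Phi>" and "de \<in> opt_set \<Phi> r"
proof -
  have "\<forall>d\<in>\<Phi>. r \<bullet> d \<le> r \<bullet> de"
    using assms(4) feasible_rewards_iff[OF assms(2,3)] by blast
  then show "opt_set \<Phi> r exposed_face_of \<Phi>" "de \<in> opt_set \<Phi> r"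
    using exposed_face_of_Int_supporting_hyperplane_le[OF assms(1)] assms(3)
    by (auto simp: opt_set_eq_supporting_hyperplane[OF assms(3)])
qed

lemma opt_set_rel_interior_feasible_subset:
  fixes \<Phi> :: "(real ^ 'n::finite) set"
  assumes "bounded \<Phi>" and "de \<in> \<Phi>"
    and r: "r \<in> rel_interior (feasible_rewards \<Phi> de)" and r': "r' \<in> feasible_rewards \<Phi> de"
  shows "opt_set \<Phi> r \<subseteq> opt_set \<Phi> r'"
proof
  fix d assume d: "d \<in> opt_set \<Phi> r"
  then have "d \<in> \<Phi>"
    by (simp add: opt_set_def)
  obtain e where "e > 1" and "(1 - e) *\<^sub>R r' + e *\<^sub>R r \<in> feasible_rewards \<Phi> de"
    using convex_rel_interior_if2[OF convex_feasible_rewards[OF assms(1,2)] r] r'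
    by (meson hull_subset subsetD)
  then have "((1 - e) *\<^sub>R r' + e *\<^sub>R r) \<bullet> d \<le> ((1 - e) *\<^sub>R r' + e *\<^sub>R r) \<bullet> de"
    using \<open>d \<in> \<Phi>\<close> feasible_rewards_iff[OF assms(1,2)] by blast
  moreover have "r \<bullet> de \<le> r \<bullet> d"
    using d assms(2) by (simp add: opt_set_def)
  then have "e * (r \<bullet> de) \<le> e * (r \<bullet> d)"
    using \<open>e > 1\<close> by simp
  ultimately have "(1 - e) * (r' \<bullet> d) \<le> (1 - e) * (r' \<bullet> de)"
    by (simp add: inner_add_left)
  then have "r' \<bullet> de \<le> r' \<bullet> d"
    using \<open>e > 1\<close> by (simp add: mult_le_cancel_left)
  then show "d \<in> opt_set \<Phi> r'"
    using r' \<open>d \<in> \<Phi>\<close> feasible_rewards_iff[OF assms(1,2)] by (auto simp: opt_set_def)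
qed

lemma reward_simplex_affine_representative:
  fixes a :: "real ^ 'n::finite"
  obtains r k c where "r \<in> reward_simplex" and "k > 0"
    and "\<And>x. (\<Sum>i\<in>UNIV. x $ i) = 1 \<Longrightarrow> r \<bullet> x = k * (a \<bullet> x) + c"
proof -
  define c where "c = 1 + (\<Sum>i\<in>UNIV. \<bar>a $ i\<bar>)"
  define v where "v = a + (\<chi> i. c)"
  define s where "s = (\<Sum>i\<in>UNIV. v $ i)"
  have v_ge_1: "1 \<le> v $ i" for i
    using member_le_sum[of i UNIV "\<lambda>i. \<bar>a $ i\<bar>"] by (simp add: v_def c_def)
  have "0 < (\<Sum>i\<in>(UNIV :: 'n set). 1 :: real)"
    by simp
  also have "\<dots> \<le> s"
    unfolding s_def using v_ge_1 by (intro sum_mono) auto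
  finally have "s > 0" .
  have simplex: "(1 / s) *\<^sub>R v \<in> reward_simplex"
    using v_ge_1 \<open>s > 0\<close> order_trans[OF zero_le_one v_ge_1]
    by (simp add: reward_simplex_def s_def sum_divide_distrib[symmetric])
  have rep: "((1 / s) *\<^sub>R v) \<bullet> x = (1 / s) * (a \<bullet> x) + c / s" if "(\<Sum>i\<in>UNIV. x $ i) = 1" for x
  proof -
    have "(\<chi> i. c) \<bullet> x = c"
      using that by (simp add: inner_vec_def sum_distrib_left[symmetric])
    then show ?thesis
      by (simp add: v_def inner_add_left divide_inverse algebra_simps)
  qed
  show ?thesis
    using that[OF simplex _ rep] \<open>s > 0\<close> by simp
qed

lemma exposed_face_eq_opt_set_feasible_reward:
  fixes \<Phi> :: "(real ^ 'n::finite) set"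
  assumes "\<Phi> \<subseteq> reward_simplex" and "F exposed_face_of \<Phi>" and "de \<in> F"
  obtains r where "r \<in> feasible_rewards \<Phi> de" and "opt_set \<Phi> r = F"
proof -
  obtain a b where a: "\<Phi> \<subseteq> {x. a \<bullet> x \<le> b}" and F: "F = \<Phi> \<inter> {x. a \<bullet> x = b}"
    using assms(2) by (auto simp: exposed_face_of_def)
  obtain r k c where r: "r \<in> reward_simplex" and "k > 0"
    and rep: "\<And>x. (\<Sum>i\<in>UNIV. x $ i) = 1 \<Longrightarrow> r \<bullet> x = k * (a \<bullet> x) + c"
    using reward_simplex_affine_representative by blast
  have de: "de \<in> \<Phi>" "a \<bullet> de = b"
    using assms(3) F by auto
  have rep\<Phi>: "r \<bullet> x = k * (a \<bullet> x) + c" if "x \<in> \<Phi>" for x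
    using rep assms(1) that by (auto simp: reward_simplex_def)
  have le: "\<forall>d\<in>\<Phi>. r \<bullet> d \<le> r \<bullet> de"
    using a de rep\<Phi> \<open>k > 0\<close> by (auto simp: mult_left_mono)
  have bounded: "bounded \<Phi>"
    using assms(1) bounded_reward_simplex bounded_subset by blast
  show ?thesis
  proof
    show "r \<in> feasible_rewards \<Phi> de"
      using r le feasible_rewards_iff[OF bounded de(1)] by blast
    show "opt_set \<Phi> r = F"
      using de rep\<Phi> \<open>k > 0\<close> by (auto simp: opt_set_eq_supporting_hyperplane[OF de(1) le] F)
  qed
qed

theorem mainTheorem7:
  fixes P :: "'s::finite \<Rightarrow> 's \<Rightarrow> 'a::finite \<Rightarrow> real"
    and \<mu>0 :: "'s \<Rightarrow> real" and \<gamma> :: real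
    and de :: "real ^ ('s \<times> 'a)" and Fe :: "(real ^ ('s \<times> 'a)) set"
  assumes P_nonneg: "\<forall>s s' a. 0 \<le> P s s' a"
    and P_sum: "\<forall>s' a. (\<Sum>s\<in>UNIV. P s s' a) = 1"
    and mu_nonneg: "\<forall>s. 0 \<le> \<mu>0 s"
    and mu_sum: "(\<Sum>s\<in>UNIV. \<mu>0 s) = 1"
    and gamma: "0 < \<gamma>" "\<gamma> < 1"
    and de: "de \<in> occ_polytope P \<mu>0 \<gamma>"
    and Fe: "minimal_face_containing (occ_polytope P \<mu>0 \<gamma>) de Fe"
  shows "(\<forall>r\<in>feasible_rewards (occ_polytope P \<mu>0 \<gamma>) de.
            opt_set (occ_polytope P \<mu>0 \<gamma>) r exposed_face_of (occ_polytope P \<mu>0 \<gamma>)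
            \<and> de \<in> opt_set (occ_polytope P \<mu>0 \<gamma>) r)
       \<and> (\<forall>r\<in>rel_interior (feasible_rewards (occ_polytope P \<mu>0 \<gamma>) de).
            opt_set (occ_polytope P \<mu>0 \<gamma>) r = Fe)"
proof -
  let ?\<Phi> = "occ_polytope P \<mu>0 \<gamma>"
  have simplex: "?\<Phi> \<subseteq> reward_simplex"
    using occ_polytope_subset_reward_simplex P_sum mu_sum gamma(2) by blast
  then have bounded: "bounded ?\<Phi>"
    using bounded_reward_simplex bounded_subset by blast
  have polyhedron: "polyhedron ?\<Phi>"
    by (rule polyhedron_occ_polytope)
  note opt_face = feasible_reward_opt_set_exposed_face[OF polyhedron_imp_convex[OF polyhedron] bounded de]
  have "opt_set ?\<Phi> r = Fe" if r: "r \<in> rel_interior (feasible_rewards ?\<Phi> de)" for r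
  proof
    have "r \<in> feasible_rewards ?\<Phi> de"
      using r rel_interior_subset by blast
    then show "Fe \<subseteq> opt_set ?\<Phi> r"
      using opt_face Fe by (auto simp: minimal_face_containing_def exposed_face_of_def)
    have "Fe exposed_face_of ?\<Phi>" "de \<in> Fe"
      using Fe exposed_face_of_polyhedron[OF polyhedron] by (auto simp: minimal_face_containing_def)
    then obtain r' where "r' \<in> feasible_rewards ?\<Phi> de" "opt_set ?\<Phi> r' = Fe"
      using exposed_face_eq_opt_set_feasible_reward[OF simplex] by blast
    then show "opt_set ?\<Phi> r \<subseteq> Fe"
      using opt_set_rel_interior_feasible_subset[OF bounded de r] by blast
  qed
  then show ?thesis
    using opt_face by blast
qed

end
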